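(* Let $n$ be a positive integer and, for $k\in\{0,\dots,n-1\}$, let \[ b_k=(-1)^{n-k}\frac{n!}{k!}\binom{2n-k-1}{n-1},\qquad \beta_k=(-1)^{n-1}\frac{(2n-k-1)!}{k!\,(n-k-1)!}. \] Let $\widetilde\Delta(z)=z^n+\sum_{k=0}^{n-1}b_kz^k+e^{-z}\sum_{k=0}^{n-1}\beta_kz^k$. Then, for every $z\in\mathbb C$, \[ \widetilde\Delta(z)=\frac{z^{2n}}{(n-1)!}\int_0^1t^{n-1}(1-t)^ne^{-zt}\,dt. \] *)

theory Defs
  imports "HOL-Analysis.Analysis"
begin

definition b_coef :: "nat \<Rightarrow> nat \<Rightarrow> complex" where
  "b_coef n k = (-1) ^ (n - k) * of_real (fact n / fact k) * of_nat ((2*n - k - 1) choose (n - 1))"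

definition beta_coef :: "nat \<Rightarrow> nat \<Rightarrow> complex" where
  "beta_coef n k = (-1) ^ (n - 1) * of_real (fact (2*n - k - 1) / (fact k * fact (n - k - 1)))"

definition Delta_tilde :: "nat \<Rightarrow> complex \<Rightarrow> complex" where
  "Delta_tilde n z = z ^ n + (\<Sum>k<n. b_coef n k * z ^ k)
      + exp (- z) * (\<Sum>k<n. beta_coef n k * z ^ k)"

end

theory Submission
  imports Defs "HOL-Computational_Algebra.Polynomial"
begin

text \<open>
  Repeated integration by parts: if \<open>degree p < m\<close>, then
  \<open>- exp (- z w) \<Sum>k<m. z^k p^(m-1-k)(w)\<close> is a primitive of \<open>z^m p(w) exp (- z w)\<close>,
  since its derivative telescopes and \<open>p^(m) = 0\<close>. For \<open>p(t) = t^(n-1) (1 - t)^n\<close> and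
  \<open>m = 2n\<close> the boundary values are Taylor coefficients of \<open>p\<close> at \<open>0\<close> and at \<open>1\<close> (the
  latter read off from the reflected polynomial \<open>p(1 - t) = t^n (1 - t)^(n-1)\<close>), and the
  binomial expansion of \<open>(1 - t)^n\<close> shows that they are \<open>(n - 1)!\<close> times the two polynomial
  parts of \<open>Delta_tilde n z\<close>.
\<close>

definition weighted_pderiv_sum ::
    "'a::{comm_semiring_1,semiring_no_zero_divisors} \<Rightarrow> nat \<Rightarrow> 'a poly \<Rightarrow> 'a \<Rightarrow> 'a" where
  "weighted_pderiv_sum z m p w = (\<Sum>k<m. z ^ k * poly ((pderiv ^^ (m - 1 - k)) p) w)"

lemma higher_pderiv_eq_0:
  fixes p :: "'a::{comm_semiring_1,semiring_no_zero_divisors,semiring_char_0} poly"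
  assumes "degree p < m"
  shows "(pderiv ^^ m) p = 0"
proof -
  obtain k where m: "m = Suc k" using assms by (cases m) auto
  have "degree ((pderiv ^^ k) p) = 0" using assms m by (simp add: degree_higher_pderiv)
  then show ?thesis using m by (simp add: pderiv_eq_0_iff)
qed

lemma weighted_pderiv_sum_has_field_derivative:
  fixes p :: "'a::real_normed_field poly"
  shows "(weighted_pderiv_sum z m p has_field_derivative
          (\<Sum>k<m. z ^ k * poly ((pderiv ^^ (m - k)) p) w)) (at w)"
proof -
  have "pderiv ((pderiv ^^ (m - 1 - k)) p) = (pderiv ^^ (m - k)) p" if "k < m" for k
  proof -
    have "m - k = Suc (m - 1 - k)" using that by simp
    then show ?thesis by simp
  qed
  then show ?thesis
    unfolding weighted_pderiv_sum_def[abs_def]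
    by (auto intro!: derivative_eq_intros sum.cong)
qed

lemma weighted_pderiv_sum_telescope:
  fixes p :: "'a::idom poly"
  shows "z * weighted_pderiv_sum z m p w - (\<Sum>k<m. z ^ k * poly ((pderiv ^^ (m - k)) p) w)
       = z ^ m * poly p w - poly ((pderiv ^^ m) p) w"
proof -
  have "z * weighted_pderiv_sum z m p w = (\<Sum>k<m. z ^ Suc k * poly ((pderiv ^^ (m - Suc k)) p) w)"
    by (simp add: weighted_pderiv_sum_def sum_distrib_left mult.assoc)
  then show ?thesis
    using sum_lessThan_telescope[of "\<lambda>k. z ^ k * poly ((pderiv ^^ (m - k)) p) w" m]
    by (simp add: sum_subtractf)
qed

lemma has_integral_poly_times_exp:
  fixes p :: "'a::{real_normed_field, banach} poly" and z :: 'a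
  assumes "degree p < m" and "a \<le> b"
  shows "((\<lambda>t. z ^ m * poly p (of_real t) * exp (- z * of_real t)) has_integral
          exp (- z * of_real a) * weighted_pderiv_sum z m p (of_real a)
          - exp (- z * of_real b) * weighted_pderiv_sum z m p (of_real b)) {a..b}"
proof -
  define F where "F w = - exp (- z * w) * weighted_pderiv_sum z m p w" for w
  have "(F has_field_derivative z ^ m * poly p w * exp (- z * w)) (at w)" for w
  proof -
    have "(F has_field_derivative exp (- z * w) *
           (z * weighted_pderiv_sum z m p w - (\<Sum>k<m. z ^ k * poly ((pderiv ^^ (m - k)) p) w))) (at w)"
      unfolding F_def
      by (auto intro!: derivative_eq_intros weighted_pderiv_sum_has_field_derivative
               simp: algebra_simps)
    then show ?thesis
      by (simp add: weighted_pderiv_sum_telescope higher_pderiv_eq_0[OF assms(1)] mult_ac)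
  qed
  then have "((\<lambda>t. z ^ m * poly p (of_real t) * exp (- z * of_real t)) has_integral
              F (of_real b) - F (of_real a)) {a..b}"
    by (intro fundamental_theorem_of_calculus assms(2) has_vector_derivative_real_field)
  then show ?thesis
    by (simp add: F_def)
qed

lemma poly_higher_pderiv_at_0:
  fixes p :: "'a::{comm_semiring_1,semiring_no_zero_divisors,semiring_char_0} poly"
  shows "poly ((pderiv ^^ j) p) 0 = fact j * coeff p j"
  by (simp add: poly_0_coeff_0 coeff_higher_pderiv pochhammer_fact)

lemma higher_pderiv_pcompose_reflect:
  fixes p :: "'a::idom poly"
  shows "(pderiv ^^ j) (p \<circ>\<^sub>p [:1, -1:]) = smult ((-1) ^ j) ((pderiv ^^ j) p \<circ>\<^sub>p [:1, -1:])"
proof (induction j)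
  case (Suc j)
  have "pderiv [:1, -1 :: 'a:] = [:-1:]" by (simp add: pderiv_pCons)
  with Suc.IH show ?case by (simp add: pderiv_smult pderiv_pcompose)
qed simp

lemma poly_higher_pderiv_at_1:
  fixes p :: "'a::{idom, ring_char_0} poly"
  shows "poly ((pderiv ^^ j) p) 1 = (-1) ^ j * fact j * coeff (p \<circ>\<^sub>p [:1, -1:]) j"
proof -
  have "p \<circ>\<^sub>p [:1, -1:] \<circ>\<^sub>p [:1, -1:] = p"
    by (simp flip: pcompose_assoc add: pcompose_pCons)
  then have "(pderiv ^^ j) p = smult ((-1) ^ j) ((pderiv ^^ j) (p \<circ>\<^sub>p [:1, -1:]) \<circ>\<^sub>p [:1, -1:])"
    using higher_pderiv_pcompose_reflect[of j "p \<circ>\<^sub>p [:1, -1:]"] by simp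
  then show ?thesis
    by (simp add: poly_pcompose poly_higher_pderiv_at_0)
qed

definition beta_poly :: "nat \<Rightarrow> nat \<Rightarrow> 'a::comm_ring_1 poly" where
  "beta_poly a b = monom 1 a * [:1, -1:] ^ b"

lemma poly_beta_poly [simp]: "poly (beta_poly a b) x = x ^ a * (1 - x) ^ b"
  by (simp add: beta_poly_def poly_monom)

lemma degree_beta_poly_le: "degree (beta_poly a b) \<le> a + b"
proof -
  have "degree [:1, -1 :: 'a:] \<le> 1"
    using degree_pCons_le[of 1 "[:-1:]"] by simp
  then have "degree [:1, -1 :: 'a:] * b \<le> b"
    using mult_le_mono1[of _ 1 b] by simp
  then have "degree ([:1, -1 :: 'a:] ^ b) \<le> b"
    by (rule order_trans[OF degree_power_le])
  then show ?thesis
    using degree_mult_le[of "monom 1 a" "[:1, -1 :: 'a:] ^ b"] degree_monom_le[of "1 :: 'a" a]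
    unfolding beta_poly_def by linarith
qed

lemma coeff_beta_poly:
  "coeff (beta_poly a b) j = (if j < a then 0 else (-1) ^ (j - a) * of_nat (b choose (j - a)))"
proof (cases "j - a \<le> b")
  case True
  then show ?thesis by (simp add: beta_poly_def coeff_monom_mult coeff_linear_poly_power)
next
  case False
  then have "degree (beta_poly a b :: 'a poly) < j"
    using degree_beta_poly_le[of a b, where 'a = 'a] by arith
  then have "coeff (beta_poly a b) j = (0 :: 'a)"
    by (rule coeff_eq_0)
  with False show ?thesis
    by (simp add: binomial_eq_0)
qed

lemma beta_poly_reflect:
  "(beta_poly a b :: 'a::{idom, ring_char_0} poly) \<circ>\<^sub>p [:1, -1:] = beta_poly b a"
  by (rule poly_ext) (simp add: poly_pcompose)

lemma b_coef_altdef: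
  assumes "k < n"
  shows "b_coef n k = (-1) ^ (n - k) * fact (2 * n - 1 - k) * of_nat (n choose k) / fact (n - 1)"
proof -
  have "2 * n - 1 - k - (n - 1) = n - k" "2 * n - k - 1 = 2 * n - 1 - k" using assms by auto
  then show ?thesis
    using assms by (simp add: b_coef_def binomial_fact field_simps)
qed

lemma beta_coef_altdef:
  assumes "k < n"
  shows "beta_coef n k = (-1) ^ (n - 1) * fact (2 * n - 1 - k) * of_nat ((n - 1) choose k) / fact (n - 1)"
proof -
  have "n - k - 1 = n - 1 - k" "2 * n - k - 1 = 2 * n - 1 - k" by auto
  then show ?thesis
    using assms by (simp add: beta_coef_def binomial_fact field_simps)
qed

lemma weighted_pderiv_sum_beta_poly_at_0:
  fixes z :: complex
  assumes "n \<ge> 1"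
  shows "weighted_pderiv_sum z (2 * n) (beta_poly (n - 1) n) 0
       = fact (n - 1) * (z ^ n + (\<Sum>k<n. b_coef n k * z ^ k))"
proof -
  define t where "t k = (-1) ^ (n - k) * fact (2 * n - 1 - k) * of_nat (n choose k) * z ^ k" for k
  have "weighted_pderiv_sum z (2 * n) (beta_poly (n - 1) n) 0
      = (\<Sum>k<2 * n. if k \<in> {..n} then t k else 0)"
    unfolding weighted_pderiv_sum_def poly_higher_pderiv_at_0
  proof (rule sum.cong)
    fix k assume "k \<in> {..<2 * n}"
    show "z ^ k * (fact (2 * n - 1 - k) * coeff (beta_poly (n - 1) n) (2 * n - 1 - k))
        = (if k \<in> {..n} then t k else 0)"
    proof (cases "k \<le> n")
      case True
      then have "2 * n - 1 - k - (n - 1) = n - k" "n choose (n - k) = n choose k"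
        using assms by (auto simp: binomial_symmetric[symmetric])
      with True show ?thesis
        by (simp add: coeff_beta_poly t_def mult_ac)
    next
      case False
      with \<open>k \<in> {..<2 * n}\<close> have "2 * n - 1 - k < n - 1" by auto
      with False show ?thesis by (simp add: coeff_beta_poly)
    qed
  qed simp
  also have "\<dots> = (\<Sum>k\<le>n. t k)"
  proof -
    have "{..<2 * n} \<inter> {..n} = {..n}" using assms by auto
    then show ?thesis by (metis (no_types) sum.inter_restrict[OF finite_lessThan])
  qed
  also have "\<dots> = fact (n - 1) * z ^ n + (\<Sum>k<n. t k)"
    using assms by (simp add: t_def lessThan_Suc_atMost[symmetric] mult_2)
  also have "(\<Sum>k<n. t k) = fact (n - 1) * (\<Sum>k<n. b_coef n k * z ^ k)"
    unfolding sum_distrib_left by (rule sum.cong) (simp_all add: t_def b_coef_altdef)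
  finally show ?thesis
    by (simp add: algebra_simps)
qed

lemma weighted_pderiv_sum_beta_poly_at_1:
  fixes z :: complex
  assumes "n \<ge> 1"
  shows "weighted_pderiv_sum z (2 * n) (beta_poly (n - 1) n) 1
       = - fact (n - 1) * (\<Sum>k<n. beta_coef n k * z ^ k)"
proof -
  define t where "t k = (-1) ^ (n - 1) * fact (2 * n - 1 - k) * of_nat ((n - 1) choose k) * z ^ k" for k
  have "weighted_pderiv_sum z (2 * n) (beta_poly (n - 1) n) 1
      = (\<Sum>k<2 * n. if k \<in> {..<n} then - t k else 0)"
    unfolding weighted_pderiv_sum_def poly_higher_pderiv_at_1 beta_poly_reflect
  proof (rule sum.cong)
    fix k assume "k \<in> {..<2 * n}"
    show "z ^ k * ((-1) ^ (2 * n - 1 - k) * fact (2 * n - 1 - k) * coeff (beta_poly n (n - 1)) (2 * n - 1 - k))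
        = (if k \<in> {..<n} then - t k else 0)"
    proof (cases "k < n")
      case True
      then have index: "\<not> 2 * n - 1 - k < n" "2 * n - 1 - k - n = n - 1 - k" "(n - 1) choose (n - 1 - k) = (n - 1) choose k"
        using binomial_symmetric[of k "n - 1"] by auto
      have "2 * n - 1 - k + (n - 1 - k) = 2 * (n - 1 - k) + Suc (n - 1)"
        using True by auto
      then have "(-1 :: complex) ^ (2 * n - 1 - k) * (-1) ^ (n - 1 - k) = (-1) ^ (2 * (n - 1 - k) + Suc (n - 1))"
        by (simp only: flip: power_add)
      also have "\<dots> = - ((-1) ^ (n - 1))"
        by (simp add: power_add power_mult)
      finally show ?thesis
        using True index by (simp add: coeff_beta_poly t_def mult_ac)
    next
      case False
      with \<open>k \<in> {..<2 * n}\<close> have "2 * n - 1 - k < n" by auto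
      with False show ?thesis by (simp add: coeff_beta_poly)
    qed
  qed simp
  also have "\<dots> = - (\<Sum>k<n. t k)"
  proof -
    have "{..<2 * n} \<inter> {..<n} = {..<n}" by auto
    then show ?thesis by (metis (no_types) sum.inter_restrict[OF finite_lessThan] sum_negf)
  qed
  also have "(\<Sum>k<n. t k) = fact (n - 1) * (\<Sum>k<n. beta_coef n k * z ^ k)"
    unfolding sum_distrib_left by (rule sum.cong) (simp_all add: t_def beta_coef_altdef)
  finally show ?thesis
    by simp
qed

theorem lemma4p5:
  fixes n :: nat and z :: complex
  assumes "n \<ge> 1"
  shows "Delta_tilde n z = z ^ (2*n) / of_real (fact (n - 1)) *
    integral {0..1::real} (\<lambda>t. of_real (t ^ (n - 1) * (1 - t) ^ n) * exp (- z * of_real t))"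
proof -
  define p :: "complex poly" where "p = beta_poly (n - 1) n"
  define f where "f t = of_real (t ^ (n - 1) * (1 - t) ^ n) * exp (- z * of_real t)" for t :: real
  have "degree p \<le> n - 1 + n"
    unfolding p_def by (rule degree_beta_poly_le)
  with assms have "degree p < 2 * n"
    by linarith
  then have "((\<lambda>t. z ^ (2 * n) * poly p (of_real t) * exp (- z * of_real t)) has_integral
      weighted_pderiv_sum z (2 * n) p 0 - exp (- z) * weighted_pderiv_sum z (2 * n) p 1) {0..1}"
    using has_integral_poly_times_exp[where a = 0 and b = 1 and z = z] by simp
  also have "weighted_pderiv_sum z (2 * n) p 0 - exp (- z) * weighted_pderiv_sum z (2 * n) p 1
      = fact (n - 1) * Delta_tilde n z"
    unfolding p_def weighted_pderiv_sum_beta_poly_at_0[OF assms] weighted_pderiv_sum_beta_poly_at_1[OF assms]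
      Delta_tilde_def by (simp add: algebra_simps)
  also have "(\<lambda>t. z ^ (2 * n) * poly p (of_real t) * exp (- z * of_real t)) = (\<lambda>t. z ^ (2 * n) * f t)"
    by (simp add: p_def f_def mult.assoc)
  finally have "((\<lambda>t. z ^ (2 * n) * f t) has_integral fact (n - 1) * Delta_tilde n z) {0..1}" .
  moreover have "f integrable_on {0..1}"
    unfolding f_def by (intro integrable_continuous_interval continuous_intros)
  ultimately have "z ^ (2 * n) * integral {0..1} f = fact (n - 1) * Delta_tilde n z"
    using has_integral_mult_right has_integral_unique by blast
  then have "Delta_tilde n z = z ^ (2 * n) / of_real (fact (n - 1)) * integral {0..1} f"
    by (simp add: field_simps)
  then show ?thesis
    unfolding f_def[abs_def] .
qed

end
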